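(* Let $(C,\mathbf A)$, $C\in\mathcal L(\mathcal X,\mathcal Y)$, $\mathbf A=(A_1,\dots,A_d)\in\mathcal L(\mathcal X)^d$, be a contractive $\mathbf a$-output-stable pair such that $\mathbf A$ is $C$-abelian. Then: (1) $M^*_{\lambda_j}\widehat{\mathcal O}^{\mathbf a}_{C,\mathbf A}=\widehat{\mathcal O}^{\mathbf a}_{C,\mathbf A}A_j$ for $j=1,\dots,d$, and hence $\operatorname{Ran}\widehat{\mathcal O}^{\mathbf a}_{C,\mathbf A}$ is invariant under each $M^*_{\lambda_j}$; (2) $\widehat{\mathcal O}^{\mathbf a}_{C,\mathbf A}$ maps $\mathcal X$ contractively into $\mathcal H_{\mathcal Y}(k_d)$, and it is isometric if and only if $(C,\mathbf A)$ is an isometric pair and $\mathbf A$ is strongly stable; (3) if $\mathcal M:=\operatorname{Ran}\widehat{\mathcal O}^{\mathbf a}_{C,\mathbf A}$ is given the lifted norm $\|\widehat{\mathcal O}^{\mathbf a}_{C,\mathbf A}x\|_{\mathcal M}=\|Q^{\mathbf a}x\|_{\mathcal X}$ (denote this space $\mathcal H(K^{\mathbf a}_{C,\mathbf A})$), then $\sum_{j=1}^d\|M^*_{\lambda_j}f\|^2_{\mathcal M}\le\|f\|^2_{\mathcal M}-\|f(0)\|^2_{\mathcal Y}$ for all $f\in\mathcal M$; moreover equality $\sum_j\|M^*_{\lambda_j}f\|^2_{\mathcal M}=\|f\|^2_{\mathcal M}-\|f(0)\|^2_{\mathcal Y}$ holds for every $f\in\mathcal M$ if and only if $(\operatorname{Ker}\mathcal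 G_{C,\mathbf A})^\perp$ is invariant under each $A_j$ and the restriction $(C^0,\mathbf A^0)$ of $(C,\mathbf A)$ to $(\operatorname{Ker}\mathcal G_{C,\mathbf A})^\perp$ is an isometric pair.
   Context: $\mathcal F_d$: free semigroup of words on $\{1,\dots,d\}$; $\mathbf A^v=A_{i_N}\cdots A_{i_1}$ for $v=i_N\cdots i_1$. Abelianization $\mathbf a\colon\mathcal F_d\to\mathbb Z^d_+$ counts occurrences of each letter; $|\mathbf n|=\sum n_k$, $\mathbf n!=\prod n_k!$, $\boldsymbol\lambda^{\mathbf n}=\prod\lambda_k^{n_k}$. Arveson space $\mathcal H_{\mathcal Y}(k_d)$: functions $\sum_{\mathbf n}f_{\mathbf n}\boldsymbol\lambda^{\mathbf n}$ on the unit ball $\mathbb B^d\subset\mathbb C^d$ with $\|f\|^2=\sum_{\mathbf n}\frac{\mathbf n!}{|\mathbf n|!}\|f_{\mathbf n}\|^2_{\mathcal Y}<\infty$; $M_{\lambda_j}$ is multiplication by $\lambda_j$ on it and $M^*_{\lambda_j}$ its adjoint. $\widehat{\mathcal O}^{\mathbf a}_{C,\mathbf A}x=\sum_{\mathbf n}\big(\sum_{v\in\mathbf a^{-1}(\mathbf n)}C\mathbf A^vx\big)\boldsymbol\lambda^{\mathbf n}$ (formally $C(I-\sum_j\lambda_jA_j)^{-1}x$); $(C,\mathbf A)$ is $\mathbf a$-output-stable if this is a bounded operator $\mathcal X\to\mathcal H_{\mathcal Y}(k_d)$; $\mathcal G^{\mathbf a}_{C,\mathbf A}=(\widehat{\mathcal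 O}^{\mathbf a}_{C,\mathbf A})^*\widehat{\mathcal O}^{\mathbf a}_{C,\mathbf A}$, and $Q^{\mathbf a}$ is the orthogonal projection onto $(\operatorname{Ker}\mathcal G^{\mathbf a}_{C,\mathbf A})^\perp$. $\mathcal G_{C,\mathbf A}=\sum_v(\mathbf A^v)^*C^*C\mathbf A^v$. $\mathbf A$ is $C$-abelian if $C\mathbf A^v=C\mathbf A^u$ whenever $\mathbf a(u)=\mathbf a(v)$. Contractive pair: $C^*C+\sum A_j^*A_j\le I$; isometric: equality. $\mathbf A$ strongly stable: $\sum_{|v|=N}\|\mathbf A^vx\|^2\to0$ for all $x$. With $\mathcal X=\operatorname{Ker}\mathcal G_{C,\mathbf A}\oplus(\operatorname{Ker}\mathcal G_{C,\mathbf A})^\perp$, $C^0=C|_{(\operatorname{Ker}\mathcal G_{C,\mathbf A})^\perp}$ and $A^0_j=P_{(\operatorname{Ker}\mathcal G_{C,\mathbf A})^\perp}A_j|_{(\operatorname{Ker}\mathcal G_{C,\mathbf A})^\perp}$. *)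

theory Defs
  imports "HOL-Analysis.Analysis"
begin

text \<open>Hilbert spaces are modelled as real inner product spaces that are complete
  (a complex Hilbert space with Re of its inner product is such a space).
  The letters are indexed by a finite type 'd (so d = CARD('d)); words of the free
  semigroup are lists of letters; a word v = i_N ... i_1 is the list [i_N, ..., i_1].\<close>

definition wordop :: "('d \<Rightarrow> 'x \<Rightarrow> 'x) \<Rightarrow> 'd list \<Rightarrow> 'x \<Rightarrow> 'x" where
  "wordop A v = foldr (\<lambda>i f. A i \<circ> f) v id"

definition abel :: "'d list \<Rightarrow> ('d \<Rightarrow> nat)" where
  "abel v = (\<lambda>k. count_list v k)"

definition mlen :: "('d::finite \<Rightarrow> nat) \<Rightarrow> nat" where
  "mlen n = (\<Sum>k\<in>UNIV. n k)"

definition arv_weight :: "('d::finite \<Rightarrow> nat) \<Rightarrow> real" where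
  "arv_weight n = (\<Prod>k\<in>UNIV. fact (n k)) / fact (mlen n)"

(* Arveson space H_Y(k_d), realised via Taylor coefficient families f = \<Sum>_n f_n \<lambda>^n *)
definition arveson :: "(('d::finite \<Rightarrow> nat) \<Rightarrow> 'y::real_inner) set" where
  "arveson = {f. (\<lambda>n. arv_weight n * (norm (f n))\<^sup>2) summable_on UNIV}"

definition arv_inner :: "(('d::finite \<Rightarrow> nat) \<Rightarrow> 'y::real_inner) \<Rightarrow> (('d \<Rightarrow> nat) \<Rightarrow> 'y) \<Rightarrow> real" where
  "arv_inner f g = (\<Sum>\<^sub>\<infinity>n. arv_weight n * (f n \<bullet> g n))"

definition arv_norm :: "(('d::finite \<Rightarrow> nat) \<Rightarrow> 'y::real_inner) \<Rightarrow> real" where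
  "arv_norm f = sqrt (\<Sum>\<^sub>\<infinity>n. arv_weight n * (norm (f n))\<^sup>2)"

definition arv_eval0 :: "(('d::finite \<Rightarrow> nat) \<Rightarrow> 'y) \<Rightarrow> 'y" where
  "arv_eval0 f = f (\<lambda>_. 0)"

definition mult_lambda :: "'d \<Rightarrow> (('d::finite \<Rightarrow> nat) \<Rightarrow> 'y::real_inner) \<Rightarrow> (('d \<Rightarrow> nat) \<Rightarrow> 'y)" where
  "mult_lambda j f = (\<lambda>n. if n j = 0 then 0 else f (n(j := n j - 1)))"

definition mult_lambda_adj :: "'d \<Rightarrow> (('d::finite \<Rightarrow> nat) \<Rightarrow> 'y::real_inner) \<Rightarrow> (('d \<Rightarrow> nat) \<Rightarrow> 'y)" where
  "mult_lambda_adj j f = (THE h. h \<in> arveson \<and>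
      (\<forall>g\<in>arveson. arv_inner (mult_lambda j g) f = arv_inner g h))"

definition obs_a :: "('x \<Rightarrow> 'y::real_vector) \<Rightarrow> ('d::finite \<Rightarrow> 'x \<Rightarrow> 'x) \<Rightarrow> 'x \<Rightarrow> (('d \<Rightarrow> nat) \<Rightarrow> 'y)" where
  "obs_a C A x = (\<lambda>n. \<Sum>v\<in>{v. abel v = n}. C (wordop A v x))"

definition a_output_stable :: "('x::real_normed_vector \<Rightarrow> 'y::real_inner) \<Rightarrow> ('d::finite \<Rightarrow> 'x \<Rightarrow> 'x) \<Rightarrow> bool" where
  "a_output_stable C A \<longleftrightarrow> (\<forall>x. obs_a C A x \<in> arveson) \<and>
      (\<exists>K. \<forall>x. arv_norm (obs_a C A x) \<le> K * norm x)"

definition gram_a :: "('x::real_inner \<Rightarrow> 'y::real_inner) \<Rightarrow> ('d::finite \<Rightarrow> 'x \<Rightarrow> 'x) \<Rightarrow> 'x \<Rightarrow> 'x" where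
  "gram_a C A x = (THE y. \<forall>x'. arv_inner (obs_a C A x) (obs_a C A x') = y \<bullet> x')"

definition gram :: "('x::real_inner \<Rightarrow> 'y::real_inner) \<Rightarrow> ('d \<Rightarrow> 'x \<Rightarrow> 'x) \<Rightarrow> 'x \<Rightarrow> 'x" where
  "gram C A x = (THE y. \<forall>x'. (\<Sum>\<^sub>\<infinity>v. C (wordop A v x) \<bullet> C (wordop A v x')) = y \<bullet> x')"

definition orth_proj :: "'x::real_inner set \<Rightarrow> 'x \<Rightarrow> 'x" where
  "orth_proj S x = (THE y. y \<in> S \<and> x - y \<in> orthogonal_comp S)"

definition Q_a :: "('x::real_inner \<Rightarrow> 'y::real_inner) \<Rightarrow> ('d::finite \<Rightarrow> 'x \<Rightarrow> 'x) \<Rightarrow> 'x \<Rightarrow> 'x" where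
  "Q_a C A = orth_proj (orthogonal_comp {x. gram_a C A x = 0})"

definition lifted_norm :: "('x::real_inner \<Rightarrow> 'y::real_inner) \<Rightarrow> ('d::finite \<Rightarrow> 'x \<Rightarrow> 'x) \<Rightarrow> (('d \<Rightarrow> nat) \<Rightarrow> 'y) \<Rightarrow> real" where
  "lifted_norm C A f = norm (Q_a C A (SOME x. obs_a C A x = f))"

definition C_abelian :: "('x \<Rightarrow> 'y) \<Rightarrow> ('d \<Rightarrow> 'x \<Rightarrow> 'x) \<Rightarrow> bool" where
  "C_abelian C A \<longleftrightarrow> (\<forall>u v x. abel u = abel v \<longrightarrow> C (wordop A v x) = C (wordop A u x))"

definition contractive_pair :: "('x::real_normed_vector \<Rightarrow> 'y::real_normed_vector) \<Rightarrow> ('d::finite \<Rightarrow> 'x \<Rightarrow> 'x) \<Rightarrow> bool" where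
  "contractive_pair C A \<longleftrightarrow> (\<forall>x. (norm (C x))\<^sup>2 + (\<Sum>j\<in>UNIV. (norm (A j x))\<^sup>2) \<le> (norm x)\<^sup>2)"

definition isometric_pair :: "('x::real_normed_vector \<Rightarrow> 'y::real_normed_vector) \<Rightarrow> ('d::finite \<Rightarrow> 'x \<Rightarrow> 'x) \<Rightarrow> bool" where
  "isometric_pair C A \<longleftrightarrow> (\<forall>x. (norm (C x))\<^sup>2 + (\<Sum>j\<in>UNIV. (norm (A j x))\<^sup>2) = (norm x)\<^sup>2)"

(* isometric pair for the compression (C|_S, P_S A_j|_S) to a closed subspace S *)
definition isometric_pair_on :: "'x::real_inner set \<Rightarrow> ('x \<Rightarrow> 'y::real_normed_vector) \<Rightarrow> ('d::finite \<Rightarrow> 'x \<Rightarrow> 'x) \<Rightarrow> bool" where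
  "isometric_pair_on S C A \<longleftrightarrow> (\<forall>x\<in>S. (norm (C x))\<^sup>2 + (\<Sum>j\<in>UNIV. (norm (orth_proj S (A j x)))\<^sup>2) = (norm x)\<^sup>2)"

definition strongly_stable :: "('d::finite \<Rightarrow> 'x::real_normed_vector \<Rightarrow> 'x) \<Rightarrow> bool" where
  "strongly_stable A \<longleftrightarrow> (\<forall>x. (\<lambda>N. \<Sum>v\<in>{v::'d list. length v = N}. (norm (wordop A v x))\<^sup>2) \<longlonglongrightarrow> 0)"

end

theory Submission
  imports Defs "HOL-Combinatorics.Multiset_Permutations"
begin

(* For a C-abelian pair the coefficient of \<lambda>^n in O^a x is |a^-1(n)| C A^w x for any word w
   with a(w) = n, and the multinomial count |a^-1(n)| = |n|!/n! is exactly the reciprocal of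
   the Arveson weight.  Hence <O^a x, O^a x'> collapses to the noncommutative sum
   \<Sum>_v <C A^v x, C A^v x'>: the Gramian of O^a is G_{C,A}, its kernel is the unobservable
   subspace, and M*_{\<lambda>_j} O^a = O^a A_j because appending the letter j to a word raises
   one exponent by one.

   Contractivity telescopes: ||x||^2 is the sum over words of length < N of ||C A^v x||^2, plus
   \<Sum>_{|v| = N} ||A^v x||^2, plus the defects ||y||^2 - ||C y||^2 - \<Sum>_j ||A_j y||^2 at
   y = A^v x, |v| < N.  Letting N \<rightarrow> \<infinity> gives ||O^a x|| \<le> ||x||, with equality
   for all x exactly when all defects vanish and \<Sum>_{|v| = N} ||A^v x||^2 \<rightarrow> 0.

   In the lifted norm, ||M*_{\<lambda>_j} O^a x|| = ||Q A_j Q x|| (the unobservable subspace is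
   A-invariant) and ||O^a x||^2 - ||C x||^2 = ||Q x||^2 - ||C Q x||^2, so (3) is contractivity at
   Q x followed by the contraction Q; equality forces ||Q A_j y|| = ||A_j y||, i.e.
   A_j y \<in> (Ker G)^\<bottom>, for y \<in> (Ker G)^\<bottom>. *)

section \<open>Projections and the Riesz representation in Hilbert spaces\<close>

lemma parallelogram_law:
  fixes a b :: "'a::real_inner"
  shows "(norm (a + b))\<^sup>2 + (norm (a - b))\<^sup>2 = 2 * (norm a)\<^sup>2 + 2 * (norm b)\<^sup>2"
  by (simp add: power2_norm_eq_inner algebra_simps inner_commute)

lemma mem_orthogonal_comp_self: "x \<in> S \<Longrightarrow> x \<in> S\<^sup>\<bottom> \<Longrightarrow> x = (0::'a::real_inner)"
  by (auto simp: orthogonal_comp_def orthogonal_def)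

lemma convex_dist_sq_le_infdist:
  fixes S :: "'a::real_inner set"
  assumes "convex S" "a \<in> S" "b \<in> S"
  shows "(dist a b)\<^sup>2 \<le> 2 * (dist x a)\<^sup>2 + 2 * (dist x b)\<^sup>2 - 4 * (infdist x S)\<^sup>2"
proof -
  have "midpoint a b \<in> S"
    using convexD[OF assms, of "1/2" "1/2"] by (simp add: midpoint_def scaleR_right_distrib)
  then have "2 * infdist x S \<le> 2 * dist x (midpoint a b)"
    by (simp add: infdist_le)
  also have "\<dots> = norm ((x - a) + (x - b))"
  proof -
    have "(x - a) + (x - b) = 2 *\<^sub>R (x - midpoint a b)"
      by (simp add: midpoint_def scaleR_right_diff_distrib scaleR_2)
    then show ?thesis by (simp add: dist_norm)
  qed
  finally have "(2 * infdist x S)\<^sup>2 \<le> (norm ((x - a) + (x - b)))\<^sup>2"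
    by (rule power_mono) (simp add: infdist_nonneg)
  moreover have "(norm ((x - a) - (x - b)))\<^sup>2 = (dist a b)\<^sup>2"
    by (simp add: dist_norm norm_minus_commute)
  ultimately show ?thesis
    using parallelogram_law[of "x - a" "x - b"] by (simp add: dist_norm power_mult_distrib)
qed

lemma convex_minimizing_sequence_Cauchy:
  fixes S :: "'a::real_inner set"
  assumes "convex S" "\<And>n. s n \<in> S" "(\<lambda>n. dist x (s n)) \<longlonglongrightarrow> infdist x S"
  shows "Cauchy s"
proof (rule metric_CauchyI)
  define d where "d = infdist x S"
  have "(\<lambda>n. 2 * (dist x (s n))\<^sup>2 - 2 * d\<^sup>2) \<longlonglongrightarrow> 2 * d\<^sup>2 - 2 * d\<^sup>2"
    unfolding d_def by (intro tendsto_intros assms(3))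
  then have excess: "(\<lambda>n. 2 * (dist x (s n))\<^sup>2 - 2 * d\<^sup>2) \<longlonglongrightarrow> 0"
    by simp
  fix e :: real assume "e > 0"
  then obtain M where M: "\<And>n. n \<ge> M \<Longrightarrow> 2 * (dist x (s n))\<^sup>2 - 2 * d\<^sup>2 < e\<^sup>2 / 2"
    using order_tendstoD(2)[OF excess, of "e\<^sup>2 / 2"] by (auto simp: eventually_sequentially)
  have "dist (s m) (s n) < e" if "m \<ge> M" "n \<ge> M" for m n
  proof -
    have "(dist (s m) (s n))\<^sup>2 < e\<^sup>2"
      using convex_dist_sq_le_infdist[OF assms(1) assms(2) assms(2), of m n x] M[OF \<open>m \<ge> M\<close>] M[OF \<open>n \<ge> M\<close>]
      by (simp add: d_def)
    then show ?thesis
      using \<open>e > 0\<close> by (simp add: power_less_imp_less_base)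
  qed
  then show "\<exists>M. \<forall>m\<ge>M. \<forall>n\<ge>M. dist (s m) (s n) < e"
    by blast
qed

lemma closed_convex_nearest_point_exists:
  fixes S :: "'a::{real_inner,complete_space} set"
  assumes "convex S" "closed S" "S \<noteq> {}"
  obtains p where "p \<in> S" "dist x p = infdist x S"
proof -
  define d where "d = infdist x S"
  have "\<exists>s\<in>S. dist x s < d + inverse (Suc n)" for n
    using cInf_lessD[of "dist x ` S" "d + inverse (Suc n)"] assms(3)
    by (auto simp: d_def infdist_notempty)
  then obtain s where s: "\<And>n. s n \<in> S" "\<And>n. dist x (s n) < d + inverse (Suc n)"
    by metis
  have "(\<lambda>n. dist x (s n)) \<longlonglongrightarrow> d"
  proof (rule tendsto_sandwich)
    show "\<forall>\<^sub>F n in sequentially. d \<le> dist x (s n)"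
      using s(1) by (simp add: d_def infdist_le)
    show "\<forall>\<^sub>F n in sequentially. dist x (s n) \<le> d + inverse (Suc n)"
      using s(2) by (simp add: less_imp_le)
    show "(\<lambda>n. d + inverse (real (Suc n))) \<longlonglongrightarrow> d"
      using tendsto_add[OF tendsto_const LIMSEQ_inverse_real_of_nat, of d] by simp
  qed simp
  then have "Cauchy s"
    unfolding d_def by (rule convex_minimizing_sequence_Cauchy[OF assms(1) s(1)])
  then obtain p where p: "s \<longlonglongrightarrow> p"
    using Cauchy_convergent_iff convergent_def by blast
  show thesis
  proof
    show "p \<in> S"
      using closed_sequentially[OF assms(2) s(1) p] .
    show "dist x p = infdist x S"
      using tendsto_unique[OF _ tendsto_dist[OF tendsto_const p] \<open>(\<lambda>n. dist x (s n)) \<longlonglongrightarrow> d\<close>]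
      by (simp add: d_def)
  qed
qed

lemma nearest_point_orthogonal:
  fixes S :: "'a::real_inner set"
  assumes "subspace S" "p \<in> S" "dist x p = infdist x S"
  shows "x - p \<in> S\<^sup>\<bottom>"
  unfolding orthogonal_comp_def orthogonal_def
proof (intro CollectI ballI)
  fix y assume "y \<in> S"
  define z where "z = x - p"
  have descent: "0 \<le> t\<^sup>2 * (y \<bullet> y) - 2 * t * (z \<bullet> y)" for t
  proof -
    have "p + t *\<^sub>R y \<in> S"
      using assms(1,2) \<open>y \<in> S\<close> by (simp add: subspace_add subspace_scale)
    then have "norm z \<le> norm (z - t *\<^sub>R y)"
      using infdist_le[of "p + t *\<^sub>R y" S x] assms(3) by (simp add: z_def dist_norm algebra_simps)
    then have "z \<bullet> z \<le> (z - t *\<^sub>R y) \<bullet> (z - t *\<^sub>R y)"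
      by (simp add: power_mono flip: power2_norm_eq_inner)
    also have "\<dots> = z \<bullet> z + t\<^sup>2 * (y \<bullet> y) - 2 * t * (z \<bullet> y)"
      by (simp add: inner_diff_left inner_diff_right inner_commute power2_eq_square algebra_simps)
    finally show ?thesis by simp
  qed
  have "z \<bullet> y = 0"
  proof (cases "y = 0")
    case False
    then have "y \<bullet> y > 0" by simp
    with descent[of "(z \<bullet> y) / (y \<bullet> y)"] have "(z \<bullet> y)\<^sup>2 \<le> 0"
      by (simp add: power2_eq_square field_simps)
    then show ?thesis by simp
  qed simp
  then show "y \<bullet> (x - p) = 0"
    by (simp add: z_def inner_commute)
qed

lemma orthogonal_decomposition_exists:
  fixes S :: "'a::{real_inner,complete_space} set"
  assumes "subspace S" "closed S"
  obtains p where "p \<in> S" "x - p \<in> S\<^sup>\<bottom>"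
proof -
  have "S \<noteq> {}"
    using subspace_0[OF assms(1)] by blast
  then obtain p where "p \<in> S" "dist x p = infdist x S"
    using closed_convex_nearest_point_exists[OF subspace_imp_convex[OF assms(1)] assms(2)] by blast
  then show thesis
    using that nearest_point_orthogonal[OF assms(1)] by blast
qed

lemma orth_proj_eqI:
  assumes "subspace S" "p \<in> S" "x - p \<in> S\<^sup>\<bottom>"
  shows "orth_proj S x = p"
  unfolding orth_proj_def
proof (rule the_equality)
  fix q assume q: "q \<in> S \<and> x - q \<in> S\<^sup>\<bottom>"
  have "q - p \<in> S"
    using assms(1,2) q by (simp add: subspace_diff)
  moreover have "(x - p) - (x - q) \<in> S\<^sup>\<bottom>"
    using subspace_diff[OF subspace_orthogonal_comp assms(3)] q by blast
  ultimately show "q = p"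
    using mem_orthogonal_comp_self[of "q - p" S] by simp
qed (use assms in simp)

lemma orth_proj_id: "subspace S \<Longrightarrow> x \<in> S \<Longrightarrow> orth_proj S x = x"
  by (rule orth_proj_eqI) (simp_all add: subspace_0 subspace_orthogonal_comp)

lemma orth_proj_orthogonal_comp:
  fixes S :: "'a::{real_inner,complete_space} set"
  assumes "subspace S" "closed S"
  shows "orth_proj (S\<^sup>\<bottom>) x \<in> S\<^sup>\<bottom>" "x - orth_proj (S\<^sup>\<bottom>) x \<in> S"
proof -
  obtain p where p: "p \<in> S" "x - p \<in> S\<^sup>\<bottom>"
    using orthogonal_decomposition_exists[OF assms] .
  have "orth_proj (S\<^sup>\<bottom>) x = x - p"
    using p orthogonal_comp_subset by (intro orth_proj_eqI subspace_orthogonal_comp) auto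
  with p show "orth_proj (S\<^sup>\<bottom>) x \<in> S\<^sup>\<bottom>" "x - orth_proj (S\<^sup>\<bottom>) x \<in> S"
    by simp_all
qed

lemma orth_proj_orthogonal_comp_cong:
  fixes S :: "'a::{real_inner,complete_space} set"
  assumes "subspace S" "closed S" "x - x' \<in> S"
  shows "orth_proj (S\<^sup>\<bottom>) x = orth_proj (S\<^sup>\<bottom>) x'"
proof (rule orth_proj_eqI[OF subspace_orthogonal_comp])
  have "(x - x') + (x' - orth_proj (S\<^sup>\<bottom>) x') \<in> S"
    using assms orth_proj_orthogonal_comp(2) by (blast intro: subspace_add)
  then show "x - orth_proj (S\<^sup>\<bottom>) x' \<in> S\<^sup>\<bottom>\<^sup>\<bottom>"
    using orthogonal_comp_subset by fastforce
qed (rule orth_proj_orthogonal_comp(1)[OF assms(1,2)])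

lemma norm_sq_orth_proj_orthogonal_comp:
  fixes S :: "'a::{real_inner,complete_space} set"
  assumes "subspace S" "closed S"
  shows "(norm x)\<^sup>2 = (norm (orth_proj (S\<^sup>\<bottom>) x))\<^sup>2 + (norm (x - orth_proj (S\<^sup>\<bottom>) x))\<^sup>2"
proof -
  have "orthogonal (x - orth_proj (S\<^sup>\<bottom>) x) (orth_proj (S\<^sup>\<bottom>) x)"
    using orth_proj_orthogonal_comp[OF assms] unfolding orthogonal_comp_def by blast
  then have "orthogonal (orth_proj (S\<^sup>\<bottom>) x) (x - orth_proj (S\<^sup>\<bottom>) x)"
    by (simp add: orthogonal_commute)
  then show ?thesis
    using norm_add_Pythagorean by fastforce
qed

lemma norm_orth_proj_orthogonal_comp_le:
  fixes S :: "'a::{real_inner,complete_space} set"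
  assumes "subspace S" "closed S"
  shows "norm (orth_proj (S\<^sup>\<bottom>) x) \<le> norm x"
proof (rule power2_le_imp_le)
  show "(norm (orth_proj (S\<^sup>\<bottom>) x))\<^sup>2 \<le> (norm x)\<^sup>2"
    using norm_sq_orth_proj_orthogonal_comp[OF assms, of x]
      zero_le_power2[of "norm (x - orth_proj (S\<^sup>\<bottom>) x)"] by linarith
qed simp

lemma norm_orth_proj_orthogonal_comp_eq_imp_mem:
  fixes S :: "'a::{real_inner,complete_space} set"
  assumes "subspace S" "closed S" "norm (orth_proj (S\<^sup>\<bottom>) x) = norm x"
  shows "x \<in> S\<^sup>\<bottom>"
proof -
  have "x = orth_proj (S\<^sup>\<bottom>) x"
    using norm_sq_orth_proj_orthogonal_comp[OF assms(1,2), of x] assms(3) by simp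
  then show ?thesis
    by (metis orth_proj_orthogonal_comp(1)[OF assms(1,2)])
qed

lemma riesz_representation:
  fixes \<phi> :: "'a::{real_inner,complete_space} \<Rightarrow> real"
  assumes "bounded_linear \<phi>"
  obtains y where "\<And>x. \<phi> x = y \<bullet> x"
proof (cases "\<forall>x. \<phi> x = 0")
  case True
  then show thesis by (intro that[of 0]) simp
next
  case False
  then obtain u where u: "\<phi> u \<noteq> 0" by blast
  interpret \<phi>: bounded_linear \<phi> by fact
  define K where "K = {x. \<phi> x = 0}"
  have "subspace K"
    by (auto simp: K_def subspace_def \<phi>.add \<phi>.scaleR)
  moreover have "closed K"
    unfolding K_def by (intro closed_Collect_eq continuous_on_const \<phi>.continuous_on continuous_on_id)
  ultimately obtain p where p: "p \<in> K" "u - p \<in> K\<^sup>\<bottom>"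
    by (rule orthogonal_decomposition_exists)
  define z where "z = u - p"
  have "\<phi> z = \<phi> u"
    using p(1) by (simp add: z_def K_def \<phi>.diff)
  then have "\<phi> z \<noteq> 0" "z \<noteq> 0"
    using u by auto
  have "\<phi> w = ((\<phi> z / (z \<bullet> z)) *\<^sub>R z) \<bullet> w" for w
  proof -
    have "w - (\<phi> w / \<phi> z) *\<^sub>R z \<in> K"
      using \<open>\<phi> z \<noteq> 0\<close> by (simp add: K_def \<phi>.diff \<phi>.scaleR)
    then have "(w - (\<phi> w / \<phi> z) *\<^sub>R z) \<bullet> z = 0"
      using p(2) by (auto simp: z_def orthogonal_comp_def orthogonal_def inner_commute)
    then have "w \<bullet> z = (\<phi> w / \<phi> z) * (z \<bullet> z)"
      by (simp add: inner_diff_left)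
    then show ?thesis
      using \<open>\<phi> z \<noteq> 0\<close> \<open>z \<noteq> 0\<close> by (simp add: inner_commute field_simps)
  qed
  then show thesis by (rule that)
qed

lemma the_inner_representer:
  fixes y :: "'a::real_inner"
  assumes "\<And>x. f x = y \<bullet> x"
  shows "(THE y. \<forall>x. f x = y \<bullet> x) = y"
proof (rule the_equality)
  fix y' assume "\<forall>x. f x = y' \<bullet> x"
  then have "(y' - y) \<bullet> (y' - y) = 0"
    using assms by (simp add: inner_diff_left)
  then show "y' = y" by simp
qed (use assms in simp)

section \<open>Words and their abelianization\<close>

lemma wordop_Nil [simp]: "wordop A [] x = x"
  by (simp add: wordop_def)

lemma wordop_Cons [simp]: "wordop A (i # v) x = A i (wordop A v x)"
  by (simp add: wordop_def)

lemma wordop_snoc: "wordop A (v @ [j]) x = wordop A v (A j x)"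
  by (induction v) auto

lemma bounded_linear_wordop:
  assumes "\<And>j. bounded_linear (A j)"
  shows "bounded_linear (wordop A v)"
proof (induction v)
  case Nil
  then show ?case
    by (simp add: wordop_def bounded_linear_ident[unfolded id_def])
next
  case (Cons i v)
  then show ?case
    using bounded_linear_compose[OF assms] by (simp add: wordop_def)
qed

lemma sum_words_length_Suc:
  "(\<Sum>v | length v = Suc N. f v) = (\<Sum>u | length u = N. \<Sum>j\<in>(UNIV::'d::finite set). f (j # u))"
proof -
  have "{v. length v = Suc N} = (\<lambda>(j, u). j # u) ` (UNIV \<times> {u::'d list. length u = N})"
    by (auto simp: length_Suc_conv image_iff)
  moreover have "inj_on (\<lambda>(j, u). j # u) (UNIV \<times> {u::'d list. length u = N})"
    by (auto simp: inj_on_def)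
  ultimately have "(\<Sum>v | length v = Suc N. f v) = (\<Sum>(j, u) \<in> UNIV \<times> {u. length u = N}. f (j # u))"
    by (simp add: sum.reindex case_prod_unfold)
  also have "\<dots> = (\<Sum>u | length u = N. \<Sum>j\<in>UNIV. f (j # u))"
    by (simp add: sum.cartesian_product [symmetric] sum.swap[of _ UNIV])
  finally show ?thesis .
qed

lemma finite_words_length_less: "finite {v :: 'd::finite list. length v < N}"
  using finite_lists_length_le[of "UNIV :: 'd set" N] by (auto elim: finite_subset[rotated])

lemma finite_words_length_eq: "finite {v :: 'd::finite list. length v = N}"
  using finite_lists_length_eq[of "UNIV :: 'd set" N] by simp

lemma words_length_less_Suc:
  "{v. length v < Suc N} = {v. length v < N} \<union> {v. length v = N}"
  by auto

lemma filterlim_words_length_less: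
  "filterlim (\<lambda>N. {v :: 'd::finite list. length v < N}) (finite_subsets_at_top UNIV) sequentially"
  unfolding filterlim_finite_subsets_at_top eventually_sequentially
proof (intro allI impI)
  fix X :: "'d list set" assume "finite X \<and> X \<subseteq> UNIV"
  then have "X \<subseteq> {v. length v < N}" if "N > (\<Sum>v\<in>X. length v)" for N
    using that member_le_sum[of _ X length] by fastforce
  then show "\<exists>M. \<forall>N\<ge>M. finite {v :: 'd list. length v < N} \<and> X \<subseteq> {v. length v < N} \<and> {v. length v < N} \<subseteq> UNIV"
    using finite_words_length_less by (metis Suc_le_eq subset_UNIV)
qed

lemma abel_snoc: "abel (v @ [j]) = (abel v)(j := abel v j + 1)"
  by (auto simp: abel_def fun_eq_iff)

lemma abel_eq_zero_iff: "abel v = (\<lambda>_. 0) \<longleftrightarrow> v = []"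
  by (cases v) (auto simp: abel_def fun_eq_iff)

lemma abel_fiber_eq_permutations:
  fixes n :: "'d::finite \<Rightarrow> nat"
  shows "{v. abel v = n} = permutations_of_multiset (Abs_multiset n)"
  by (auto simp: permutations_of_multiset_def abel_def multiset_eq_iff fun_eq_iff count_mset)

lemma finite_abel_fiber: "finite {v. abel v = (n :: 'd::finite \<Rightarrow> nat)}"
  by (simp add: abel_fiber_eq_permutations)

lemma abel_fiber_nonempty: "\<exists>v. abel v = (n :: 'd::finite \<Rightarrow> nat)"
proof -
  obtain v where "mset v = Abs_multiset n"
    using ex_mset by blast
  then have "abel v = n"
    by (simp add: abel_def fun_eq_iff flip: count_mset)
  then show ?thesis ..
qed

lemma arv_weight_pos: "arv_weight n > 0"
  by (simp add: arv_weight_def prod_pos)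

lemma arv_weight_mult_card_abel_fiber: "arv_weight n * real (card {v. abel v = n}) = 1"
proof -
  define M where "M = Abs_multiset n"
  have count_M: "count M = n"
    by (simp add: M_def)
  have "card (permutations_of_multiset M) * (\<Prod>k\<in>set_mset M. fact (count M k)) = fact (size M)"
    by (rule card_permutations_of_multiset_aux)
  moreover have "(\<Prod>k\<in>set_mset M. fact (count M k)) = (\<Prod>k\<in>UNIV. fact (n k) :: nat)"
    unfolding count_M by (rule prod.mono_neutral_left) (auto simp: not_in_iff count_M)
  moreover have "size M = mlen n"
    unfolding mlen_def size_multiset_overloaded_eq count_M[symmetric]
    by (rule sum.mono_neutral_left) (auto simp: not_in_iff)
  ultimately have "card {v. abel v = n} * (\<Prod>k\<in>UNIV. fact (n k)) = fact (mlen n)"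
    by (simp add: abel_fiber_eq_permutations M_def)
  then have "real (card {v. abel v = n} * (\<Prod>k\<in>UNIV. fact (n k))) = fact (mlen n)"
    by (simp only: of_nat_fact)
  then have "real (card {v. abel v = n}) * (\<Prod>k\<in>UNIV. fact (n k)) = fact (mlen n)"
    by (simp add: of_nat_prod)
  then show ?thesis
    by (simp add: arv_weight_def field_simps)
qed

lemma has_sum_finite_fibers:
  fixes f :: "'a \<Rightarrow> 'c::{comm_monoid_add,uniform_space,uniform_topological_group_add}"
  assumes "(f has_sum s) UNIV" "\<And>b. finite {a. g a = b}"
  shows "((\<lambda>b. \<Sum>a | g a = b. f a) has_sum s) UNIV"
proof (rule has_sum_Sigma'[where f = "\<lambda>(b, a). f a" and B = "\<lambda>b. {a. g a = b}"])
  have "Sigma UNIV (\<lambda>b. {a. g a = b}) = (\<lambda>a. (g a, a)) ` UNIV"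
    by auto
  moreover have "inj (\<lambda>a. (g a, a))"
    by (auto intro: injI)
  ultimately show "((\<lambda>(b, a). f a) has_sum s) (Sigma UNIV (\<lambda>b. {a. g a = b}))"
    using assms(1) by (simp add: has_sum_reindex o_def)
  show "((\<lambda>a. (\<lambda>(b, a). f a) (b, a)) has_sum (\<Sum>a | g a = b. f a)) {a. g a = b}" for b
    using assms(2) by simp
qed

section \<open>Output energy of a contractive pair\<close>

definition pair_defect ::
    "('x::real_normed_vector \<Rightarrow> 'y::real_normed_vector) \<Rightarrow> ('d::finite \<Rightarrow> 'x \<Rightarrow> 'x) \<Rightarrow> 'x \<Rightarrow> real" where
  "pair_defect C A x = (norm x)\<^sup>2 - (norm (C x))\<^sup>2 - (\<Sum>j\<in>UNIV. (norm (A j x))\<^sup>2)"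

definition output_energy :: "('x \<Rightarrow> 'y::real_normed_vector) \<Rightarrow> ('d \<Rightarrow> 'x \<Rightarrow> 'x) \<Rightarrow> 'x \<Rightarrow> real" where
  "output_energy C A x = (\<Sum>\<^sub>\<infinity>v. (norm (C (wordop A v x)))\<^sup>2)"

definition output_form :: "('x \<Rightarrow> 'y::real_inner) \<Rightarrow> ('d \<Rightarrow> 'x \<Rightarrow> 'x) \<Rightarrow> 'x \<Rightarrow> 'x \<Rightarrow> real" where
  "output_form C A x x' = (\<Sum>\<^sub>\<infinity>v. C (wordop A v x) \<bullet> C (wordop A v x'))"

lemma isometric_pair_iff_pair_defect: "isometric_pair C A \<longleftrightarrow> (\<forall>x. pair_defect C A x = 0)"
proof -
  have "a + s = b \<longleftrightarrow> b - a - s = 0" for a s b :: real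
    by linarith
  then show ?thesis
    by (simp add: isometric_pair_def pair_defect_def)
qed

lemma energy_telescope:
  "(\<Sum>v | length v < N. (norm (C (wordop A v x)))\<^sup>2) + (\<Sum>v | length v = N. (norm (wordop A v x))\<^sup>2)
     + (\<Sum>v | length v < N. pair_defect C A (wordop A v x)) = (norm x)\<^sup>2"
proof (induction N)
  case (Suc N)
  have "(\<Sum>v | length v = Suc N. (norm (wordop A v x))\<^sup>2)
      = (\<Sum>v | length v = N. (norm (wordop A v x))\<^sup>2 - (norm (C (wordop A v x)))\<^sup>2
                              - pair_defect C A (wordop A v x))"
    by (simp add: sum_words_length_Suc pair_defect_def)
  moreover have "{v :: 'd list. length v < N} \<inter> {v. length v = N} = {}"
    by auto
  note split = sum.union_disjoint[OF finite_words_length_less finite_words_length_eq this]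
  ultimately show ?case
    using Suc.IH by (simp add: words_length_less_Suc split sum_subtractf)
qed simp

locale contractive_system =
  fixes C :: "'x::real_inner \<Rightarrow> 'y::real_inner" and A :: "'d::finite \<Rightarrow> 'x \<Rightarrow> 'x"
  assumes contractive: "contractive_pair C A"
begin

lemma pair_defect_nonneg: "pair_defect C A x \<ge> 0"
  using contractive[unfolded contractive_pair_def, rule_format, of x] by (simp add: pair_defect_def)

lemma partial_energy_le: "(\<Sum>v | length v < N. (norm (C (wordop A v x)))\<^sup>2) \<le> (norm x)\<^sup>2"
proof -
  have "0 \<le> (\<Sum>v | length v = N. (norm (wordop A v x))\<^sup>2)"
    by (simp add: sum_nonneg)
  moreover have "0 \<le> (\<Sum>v | length v < N. pair_defect C A (wordop A v x))"
    by (simp add: sum_nonneg pair_defect_nonneg)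
  ultimately show ?thesis
    using energy_telescope[where C=C and A=A and N=N and x=x] by linarith
qed

lemma summable_energy: "(\<lambda>v. (norm (C (wordop A v x)))\<^sup>2) summable_on UNIV"
proof (rule nonneg_bdd_above_summable_on)
  show "bdd_above (sum (\<lambda>v. (norm (C (wordop A v x)))\<^sup>2) ` {F. F \<subseteq> UNIV \<and> finite F})"
  proof (rule bdd_aboveI)
    fix s assume "s \<in> sum (\<lambda>v. (norm (C (wordop A v x)))\<^sup>2) ` {F. F \<subseteq> UNIV \<and> finite F}"
    then obtain F where F: "finite F" "s = (\<Sum>v\<in>F. (norm (C (wordop A v x)))\<^sup>2)"
      by auto
    then have "F \<subseteq> {v. length v < Suc (\<Sum>v\<in>F. length v)}"
      using member_le_sum[of _ F length] by fastforce
    then have "s \<le> (\<Sum>v | length v < Suc (\<Sum>v\<in>F. length v). (norm (C (wordop A v x)))\<^sup>2)"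
      unfolding F(2) by (intro sum_mono2 finite_words_length_less) auto
    also have "\<dots> \<le> (norm x)\<^sup>2"
      by (rule partial_energy_le)
    finally show "s \<le> (norm x)\<^sup>2" .
  qed
qed simp

lemma partial_energy_tendsto:
  "(\<lambda>N. \<Sum>v | length v < N. (norm (C (wordop A v x)))\<^sup>2) \<longlonglongrightarrow> output_energy C A x"
proof -
  have "(sum (\<lambda>v. (norm (C (wordop A v x)))\<^sup>2) \<longlongrightarrow> output_energy C A x) (finite_subsets_at_top UNIV)"
    using has_sum_infsum[OF summable_energy] by (simp add: has_sum_def output_energy_def)
  from filterlim_compose[OF this filterlim_words_length_less] show ?thesis
    by (simp add: o_def)
qed

lemma output_energy_le: "output_energy C A x \<le> (norm x)\<^sup>2"
  by (rule LIMSEQ_le_const2[OF partial_energy_tendsto]) (use partial_energy_le in blast)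

lemma energy_gap_tendsto:
  "(\<lambda>N. (\<Sum>v | length v = N. (norm (wordop A v x))\<^sup>2) + (\<Sum>v | length v < N. pair_defect C A (wordop A v x)))
     \<longlonglongrightarrow> (norm x)\<^sup>2 - output_energy C A x"
proof -
  have "(\<lambda>N. (norm x)\<^sup>2 - (\<Sum>v | length v < N. (norm (C (wordop A v x)))\<^sup>2))
      \<longlonglongrightarrow> (norm x)\<^sup>2 - output_energy C A x"
    by (intro tendsto_diff tendsto_const partial_energy_tendsto)
  moreover have "(norm x)\<^sup>2 - (\<Sum>v | length v < N. (norm (C (wordop A v x)))\<^sup>2)
      = (\<Sum>v | length v = N. (norm (wordop A v x))\<^sup>2) + (\<Sum>v | length v < N. pair_defect C A (wordop A v x))"
    for N
    using energy_telescope[where C=C and A=A and N=N and x=x] by linarith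
  ultimately show ?thesis
    by simp
qed

lemma output_energy_eq_norm_iff:
  "(\<forall>x. output_energy C A x = (norm x)\<^sup>2) \<longleftrightarrow> isometric_pair C A \<and> strongly_stable A"
proof -
  define S where "S = (\<lambda>x N. \<Sum>v | length v = N. (norm (wordop A v x))\<^sup>2)"
  define D where "D = (\<lambda>x N. \<Sum>v | length v < N. pair_defect C A (wordop A v x))"
  have S_nonneg: "S x N \<ge> 0" and D_nonneg: "D x N \<ge> 0" for x N
    by (simp_all add: S_def D_def sum_nonneg pair_defect_nonneg)
  have gap: "output_energy C A x = (norm x)\<^sup>2 \<longleftrightarrow> (\<lambda>N. S x N + D x N) \<longlonglongrightarrow> 0" for x
    using energy_gap_tendsto[of x] LIMSEQ_unique unfolding S_def D_def by fastforce
  show ?thesis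
  proof
    assume "\<forall>x. output_energy C A x = (norm x)\<^sup>2"
    then have lim: "(\<lambda>N. S x N + D x N) \<longlonglongrightarrow> 0" for x
      using gap by blast
    have "(S x) \<longlonglongrightarrow> 0" for x
      by (rule tendsto_sandwich[OF _ _ tendsto_const lim[of x]]) (simp_all add: S_nonneg D_nonneg)
    then have "strongly_stable A"
      by (simp add: strongly_stable_def S_def)
    moreover have "pair_defect C A x = 0" for x
    proof -
      have "pair_defect C A x \<le> S x N + D x N" if "N \<ge> 1" for N
        using that S_nonneg[of x N] member_le_sum[of "[]" "{v. length v < N}" "\<lambda>v. pair_defect C A (wordop A v x)"]
        by (simp add: D_def finite_words_length_less pair_defect_nonneg)
      then have "pair_defect C A x \<le> 0"
        using LIMSEQ_le_const[OF lim[of x]] by blast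
      then show ?thesis
        using pair_defect_nonneg[of x] by simp
    qed
    ultimately show "isometric_pair C A \<and> strongly_stable A"
      by (simp add: isometric_pair_iff_pair_defect)
  next
    assume "isometric_pair C A \<and> strongly_stable A"
    then have "D x N = 0" and "(S x) \<longlonglongrightarrow> 0" for x N
      by (simp_all add: D_def S_def isometric_pair_iff_pair_defect strongly_stable_def)
    then show "\<forall>x. output_energy C A x = (norm x)\<^sup>2"
      using gap by simp
  qed
qed

lemma abs_inner_output_le:
  "\<bar>C (wordop A v x) \<bullet> C (wordop A v x')\<bar>
     \<le> 1/2 * ((norm (C (wordop A v x)))\<^sup>2 + (norm (C (wordop A v x')))\<^sup>2)"
  using Cauchy_Schwarz_ineq2[of "C (wordop A v x)" "C (wordop A v x')"]
    sum_squares_bound[of "norm (C (wordop A v x))" "norm (C (wordop A v x'))"] by simp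

lemma summable_energy_mean:
  "(\<lambda>v. 1/2 * ((norm (C (wordop A v x)))\<^sup>2 + (norm (C (wordop A v x')))\<^sup>2)) summable_on UNIV"
  by (intro summable_on_cmult_right summable_on_add summable_energy)

lemma abs_summable_output_form: "(\<lambda>v. \<bar>C (wordop A v x) \<bullet> C (wordop A v x')\<bar>) summable_on UNIV"
  by (rule summable_on_comparison_test[OF summable_energy_mean[of x x']])
    (use abs_inner_output_le in auto)

lemma summable_output_form: "(\<lambda>v. C (wordop A v x) \<bullet> C (wordop A v x')) summable_on UNIV"
  by (rule abs_summable_summable) (use abs_summable_output_form in simp)

lemma output_form_self: "output_form C A x x = output_energy C A x"
  by (simp add: output_form_def output_energy_def power2_norm_eq_inner)

lemma abs_output_form_le: "\<bar>output_form C A x x'\<bar> \<le> ((norm x)\<^sup>2 + (norm x')\<^sup>2) / 2"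
proof -
  have "\<bar>output_form C A x x'\<bar> \<le> (\<Sum>\<^sub>\<infinity>v. \<bar>C (wordop A v x) \<bullet> C (wordop A v x')\<bar>)"
    using norm_infsum_bound[of "\<lambda>v. C (wordop A v x) \<bullet> C (wordop A v x')" UNIV]
      abs_summable_output_form by (simp add: output_form_def)
  also have "\<dots> \<le> (\<Sum>\<^sub>\<infinity>v. 1/2 * ((norm (C (wordop A v x)))\<^sup>2 + (norm (C (wordop A v x')))\<^sup>2))"
    by (intro infsum_mono abs_summable_output_form summable_energy_mean abs_inner_output_le)
  also have "\<dots> = 1/2 * (output_energy C A x + output_energy C A x')"
    by (subst infsum_cmult_right') (simp add: output_energy_def infsum_add summable_energy)
  also have "\<dots> \<le> ((norm x)\<^sup>2 + (norm x')\<^sup>2) / 2"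
    using output_energy_le[of x] output_energy_le[of x'] by simp
  finally show ?thesis .
qed

end

section \<open>The Gramian and the unobservable subspace\<close>

definition unobservable :: "('x \<Rightarrow> 'y::zero) \<Rightarrow> ('d \<Rightarrow> 'x \<Rightarrow> 'x) \<Rightarrow> 'x set" where
  "unobservable C A = {x. \<forall>v. C (wordop A v x) = 0}"

locale linear_contractive_system = contractive_system C A
  for C :: "'x::{real_inner,complete_space} \<Rightarrow> 'y::real_inner" and A :: "'d::finite \<Rightarrow> 'x \<Rightarrow> 'x" +
  assumes bounded_linear_C: "bounded_linear C"
    and bounded_linear_A: "\<And>j. bounded_linear (A j)"
begin

lemma bounded_linear_output: "bounded_linear (\<lambda>x. C (wordop A v x))"
  using bounded_linear_compose[OF bounded_linear_C bounded_linear_wordop[OF bounded_linear_A]] .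

lemma linear_output: "linear (\<lambda>x. C (wordop A v x))"
  using bounded_linear_output by (rule bounded_linear.linear)

lemma output_form_scaleR_right: "output_form C A x (r *\<^sub>R x') = r * output_form C A x x'"
  by (simp add: output_form_def linear_scale[OF linear_output] infsum_cmult_right')

lemma bounded_linear_output_form: "bounded_linear (output_form C A x)"
proof (rule bounded_linear_intro[where K = "((norm x)\<^sup>2 + 1) / 2"])
  show "output_form C A x (a + b) = output_form C A x a + output_form C A x b" for a b
    by (simp add: output_form_def linear_add[OF linear_output] inner_add_right
        infsum_add summable_output_form)
  show "output_form C A x (r *\<^sub>R a) = r *\<^sub>R output_form C A x a" for r a
    by (simp add: output_form_scaleR_right)
  show "norm (output_form C A x a) \<le> norm a * (((norm x)\<^sup>2 + 1) / 2)" for a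
  proof (cases "a = 0")
    case True
    then show ?thesis
      using output_form_scaleR_right[of x 0 0] by simp
  next
    case False
    define u where "u = a /\<^sub>R norm a"
    have "output_form C A x a = norm a * output_form C A x u"
      using False by (simp add: u_def flip: output_form_scaleR_right)
    moreover have "\<bar>output_form C A x u\<bar> \<le> ((norm x)\<^sup>2 + 1) / 2"
      using abs_output_form_le[of x u] False by (simp add: u_def)
    then have "norm a * \<bar>output_form C A x u\<bar> \<le> norm a * (((norm x)\<^sup>2 + 1) / 2)"
      by (rule mult_left_mono) simp
    ultimately show ?thesis
      by (simp add: abs_mult)
  qed
qed

lemma gram_inner: "gram C A x \<bullet> x' = output_form C A x x'"
proof -
  obtain y where y: "\<And>x'. output_form C A x x' = y \<bullet> x'"
    using riesz_representation[OF bounded_linear_output_form[of x]] by blast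
  then have "gram C A x = y"
    unfolding gram_def using the_inner_representer[of "output_form C A x" y] by (simp add: output_form_def)
  with y show ?thesis
    by simp
qed

lemma subspace_unobservable: "subspace (unobservable C A)"
  using linear_add[OF linear_output] linear_scale[OF linear_output]
    linear_0[OF linear_output]
  by (auto simp: subspace_def unobservable_def)

lemma closed_unobservable: "closed (unobservable C A)"
  unfolding unobservable_def
  by (intro closed_Collect_all closed_Collect_eq continuous_on_const
      bounded_linear.continuous_on[OF bounded_linear_output] continuous_on_id)

lemma unobservable_invariant: "x \<in> unobservable C A \<Longrightarrow> A j x \<in> unobservable C A"
  by (simp add: unobservable_def flip: wordop_snoc)

lemma gram_eq_0_iff: "gram C A x = 0 \<longleftrightarrow> x \<in> unobservable C A"
proof
  assume "gram C A x = 0"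
  then have energy_0: "output_energy C A x = 0"
    using gram_inner[of x x] by (simp add: output_form_self)
  have "(norm (C (wordop A v x)))\<^sup>2 \<le> output_energy C A x" for v
    using finite_sum_le_infsum[OF summable_energy, of "{v}"] by (simp add: output_energy_def)
  then show "x \<in> unobservable C A"
    using energy_0 by (simp add: unobservable_def)
next
  assume "x \<in> unobservable C A"
  then have "output_form C A x (gram C A x) = 0"
    by (simp add: output_form_def unobservable_def)
  then show "gram C A x = 0"
    using gram_inner[of x "gram C A x"] by simp
qed

end

lemma isometric_pair_on_orthogonal_comp_invariant:
  fixes S :: "'x::{real_inner,complete_space} set"
  assumes "contractive_pair C A" "subspace S" "closed S"
    and "isometric_pair_on (S\<^sup>\<bottom>) C A" "y \<in> S\<^sup>\<bottom>"
  shows "A j y \<in> S\<^sup>\<bottom>"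
proof -
  define loss where "loss i = (norm (A i y))\<^sup>2 - (norm (orth_proj (S\<^sup>\<bottom>) (A i y)))\<^sup>2" for i
  have loss_nonneg: "loss i \<ge> 0" for i
    using norm_orth_proj_orthogonal_comp_le[OF assms(2,3)] by (simp add: loss_def power_mono)
  have "(norm (C y))\<^sup>2 + (\<Sum>i\<in>UNIV. (norm (A i y))\<^sup>2) \<le> (norm y)\<^sup>2"
    using assms(1) by (simp add: contractive_pair_def)
  moreover have "(norm (C y))\<^sup>2 + (\<Sum>i\<in>UNIV. (norm (orth_proj (S\<^sup>\<bottom>) (A i y)))\<^sup>2) = (norm y)\<^sup>2"
    using assms(4,5) by (simp add: isometric_pair_on_def)
  ultimately have "(\<Sum>i\<in>UNIV. loss i) \<le> 0"
    by (simp add: loss_def sum_subtractf)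
  then have "loss j = 0"
    using sum_nonneg_eq_0_iff[of UNIV loss] loss_nonneg by (simp add: sum_nonneg order_antisym)
  then show ?thesis
    using norm_orth_proj_orthogonal_comp_eq_imp_mem[OF assms(2,3)] by (simp add: loss_def)
qed

section \<open>The Arveson space and the observability operator of a C-abelian pair\<close>

lemma arv_inner_ext:
  fixes h h' :: "('d::finite \<Rightarrow> nat) \<Rightarrow> 'y::real_inner"
  assumes "\<And>g. g \<in> arveson \<Longrightarrow> arv_inner g h = arv_inner g h'"
  shows "h = h'"
proof
  fix n
  define g where "g = (\<lambda>m. if m = n then h n - h' n else 0)"
  have inner_g: "arv_inner g k = arv_weight n * ((h n - h' n) \<bullet> k n)" for k :: "('d \<Rightarrow> nat) \<Rightarrow> 'y"
    unfolding arv_inner_def by (subst infsum_cong_neutral[where T = "{n}"]) (auto simp: g_def)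
  have "(\<lambda>m. arv_weight m * (norm (g m))\<^sup>2) summable_on UNIV
      \<longleftrightarrow> (\<lambda>m. arv_weight m * (norm (g m))\<^sup>2) summable_on {n}"
    by (rule summable_on_cong_neutral) (auto simp: g_def)
  then have "g \<in> arveson"
    by (simp add: arveson_def)
  then have "arv_weight n * ((h n - h' n) \<bullet> h n) = arv_weight n * ((h n - h' n) \<bullet> h' n)"
    using assms[of g] by (simp add: inner_g)
  then have "arv_weight n * ((h n - h' n) \<bullet> (h n - h' n)) = 0"
    by (simp add: inner_diff_right right_diff_distrib)
  then show "h n = h' n"
    using arv_weight_pos[of n] by simp
qed

lemma arv_eval0_obs_a:
  fixes A :: "'d::finite \<Rightarrow> 'x \<Rightarrow> 'x"
  shows "arv_eval0 (obs_a C A x) = C x"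
proof -
  have "{v :: 'd list. abel v = (\<lambda>_. 0)} = {[]}"
    using abel_eq_zero_iff by blast
  then show ?thesis
    by (simp add: arv_eval0_def obs_a_def)
qed

lemma C_abelianD: "C_abelian C A \<Longrightarrow> abel u = abel v \<Longrightarrow> C (wordop A u x) = C (wordop A v x)"
  unfolding C_abelian_def by metis

lemma arv_weight_scaleR_obs_a:
  assumes "C_abelian C A" "abel v = n"
  shows "arv_weight n *\<^sub>R obs_a C A x n = C (wordop A v x)"
proof -
  have "obs_a C A x n = (\<Sum>u | abel u = n. C (wordop A v x))"
    unfolding obs_a_def using C_abelianD[OF assms(1)] assms(2) by (intro sum.cong) auto
  then show ?thesis
    using arv_weight_mult_card_abel_fiber[of n] by (simp add: sum_constant_scaleR)
qed

lemma arv_weight_inner_obs_a: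
  assumes "C_abelian C A"
  shows "arv_weight n * (obs_a C A x n \<bullet> obs_a C A x' n)
    = (\<Sum>v | abel v = n. C (wordop A v x) \<bullet> C (wordop A v x'))"
proof -
  obtain w where w: "abel w = n"
    using abel_fiber_nonempty by blast
  have "(\<Sum>v | abel v = n. C (wordop A v x) \<bullet> C (wordop A v x'))
      = (\<Sum>v | abel v = n. C (wordop A w x) \<bullet> C (wordop A w x'))"
  proof (rule sum.cong)
    fix v assume "v \<in> {v. abel v = n}"
    then have same_abel: "abel v = abel w"
      using w by simp
    show "C (wordop A v x) \<bullet> C (wordop A v x') = C (wordop A w x) \<bullet> C (wordop A w x')"
      by (simp only: C_abelianD[OF assms same_abel])
  qed simp
  also have "\<dots> = real (card {v. abel v = n}) * (C (wordop A w x) \<bullet> C (wordop A w x'))"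
    by simp
  also have "\<dots> = real (card {v. abel v = n}) * arv_weight n
      * (arv_weight n * (obs_a C A x n \<bullet> obs_a C A x' n))"
    by (simp flip: arv_weight_scaleR_obs_a[OF assms w])
  finally show ?thesis
    by (simp add: mult.commute[of "real _"] arv_weight_mult_card_abel_fiber)
qed

lemma arv_weight_scaleR_obs_a_shift:
  assumes "C_abelian C A"
  shows "arv_weight (m(j := m j + 1)) *\<^sub>R obs_a C A x (m(j := m j + 1))
    = arv_weight m *\<^sub>R obs_a C A (A j x) m"
proof -
  obtain w where w: "abel w = m"
    using abel_fiber_nonempty[of m] ..
  have "abel (w @ [j]) = m(j := m j + 1)"
    by (simp add: abel_snoc w)
  then have "arv_weight (m(j := m j + 1)) *\<^sub>R obs_a C A x (m(j := m j + 1)) = C (wordop A (w @ [j]) x)"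
    by (rule arv_weight_scaleR_obs_a[OF assms])
  also have "\<dots> = arv_weight m *\<^sub>R obs_a C A (A j x) m"
    by (simp add: wordop_snoc arv_weight_scaleR_obs_a[OF assms w])
  finally show ?thesis .
qed

lemma arv_inner_mult_lambda_obs_a:
  fixes A :: "'d::finite \<Rightarrow> 'x \<Rightarrow> 'x" and j :: 'd
  assumes "C_abelian C A"
  shows "arv_inner (mult_lambda j g) (obs_a C A x) = arv_inner g (obs_a C A (A j x))"
proof -
  define shift where "shift m = m(j := m j + 1)" for m :: "'d \<Rightarrow> nat"
  define F where "F n = arv_weight n * (mult_lambda j g n \<bullet> obs_a C A x n)" for n
  have "inj shift"
    by (rule injI) (metis shift_def add_right_cancel fun_upd_idem_iff fun_upd_upd fun_upd_same)
  have "arv_inner (mult_lambda j g) (obs_a C A x) = infsum F (range shift)"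
    unfolding arv_inner_def F_def
  proof (rule infsum_cong_neutral)
    fix n assume "n \<in> UNIV - range shift"
    have "n j = 0"
    proof (rule ccontr)
      assume "n j \<noteq> 0"
      then have "n = shift (n(j := n j - 1))"
        by (auto simp: shift_def fun_eq_iff)
      with \<open>n \<in> UNIV - range shift\<close> show False
        by blast
    qed
    then show "arv_weight n * (mult_lambda j g n \<bullet> obs_a C A x n) = 0"
      by (simp add: mult_lambda_def)
  qed auto
  also have "\<dots> = infsum (F \<circ> shift) UNIV"
    by (rule infsum_reindex[OF \<open>inj shift\<close>])
  also have "\<dots> = arv_inner g (obs_a C A (A j x))"
    unfolding arv_inner_def
  proof (rule infsum_cong)
    fix m :: "'d \<Rightarrow> nat"
    have "mult_lambda j g (shift m) = g m"
      by (simp add: mult_lambda_def shift_def)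
    then show "(F \<circ> shift) m = arv_weight m * (g m \<bullet> obs_a C A (A j x) m)"
      using arv_weight_scaleR_obs_a_shift[OF assms, of m j x]
      by (simp add: F_def shift_def) (metis inner_scaleR_right)
  qed
  finally show ?thesis .
qed

locale abelian_system = linear_contractive_system +
  assumes C_abelian: "C_abelian C A"
begin

lemma has_sum_arv_inner_obs_a:
  "((\<lambda>n. arv_weight n * (obs_a C A x n \<bullet> obs_a C A x' n)) has_sum output_form C A x x') UNIV"
  using has_sum_finite_fibers[OF has_sum_infsum[OF summable_output_form] finite_abel_fiber]
  by (simp add: arv_weight_inner_obs_a[OF C_abelian] output_form_def)

lemma arv_inner_obs_a: "arv_inner (obs_a C A x) (obs_a C A x') = output_form C A x x'"
  unfolding arv_inner_def using has_sum_arv_inner_obs_a by (rule infsumI)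

lemma obs_a_in_arveson: "obs_a C A x \<in> arveson"
  using has_sum_arv_inner_obs_a[of x x] by (auto simp: arveson_def power2_norm_eq_inner summable_on_def)

lemma arv_norm_obs_a: "arv_norm (obs_a C A x) = sqrt (output_energy C A x)"
  using arv_inner_obs_a[of x x]
  by (simp add: arv_norm_def arv_inner_def power2_norm_eq_inner output_form_self)

lemma arv_norm_obs_a_le: "arv_norm (obs_a C A x) \<le> norm x"
  using real_sqrt_le_mono[OF output_energy_le[of x]] by (simp add: arv_norm_obs_a)

lemma arv_norm_obs_a_eq_iff: "arv_norm (obs_a C A x) = norm x \<longleftrightarrow> output_energy C A x = (norm x)\<^sup>2"
proof -
  have "output_energy C A x \<ge> 0"
    unfolding output_energy_def by (rule infsum_nonneg) simp
  show ?thesis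
  proof
    assume "arv_norm (obs_a C A x) = norm x"
    then have "(sqrt (output_energy C A x))\<^sup>2 = (norm x)\<^sup>2"
      by (simp add: arv_norm_obs_a)
    with \<open>output_energy C A x \<ge> 0\<close> show "output_energy C A x = (norm x)\<^sup>2"
      by simp
  qed (simp add: arv_norm_obs_a)
qed

lemma mult_lambda_adj_obs_a: "mult_lambda_adj j (obs_a C A x) = obs_a C A (A j x)"
  unfolding mult_lambda_adj_def
proof (rule the_equality)
  show "obs_a C A (A j x) \<in> arveson \<and>
      (\<forall>g\<in>arveson. arv_inner (mult_lambda j g) (obs_a C A x) = arv_inner g (obs_a C A (A j x)))"
    by (simp add: obs_a_in_arveson arv_inner_mult_lambda_obs_a[OF C_abelian])
  show "h = obs_a C A (A j x)"
    if "h \<in> arveson \<and> (\<forall>g\<in>arveson. arv_inner (mult_lambda j g) (obs_a C A x) = arv_inner g h)" for h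
    using that by (intro arv_inner_ext) (simp add: arv_inner_mult_lambda_obs_a[OF C_abelian])
qed

lemma gram_a_eq_gram: "gram_a C A = gram C A"
  by (simp add: fun_eq_iff gram_a_def gram_def arv_inner_obs_a output_form_def)

lemma obs_a_eq_iff: "obs_a C A x = obs_a C A x' \<longleftrightarrow> x - x' \<in> unobservable C A"
proof
  assume obs_eq: "obs_a C A x = obs_a C A x'"
  have "C (wordop A v x) = C (wordop A v x')" for v
    using arv_weight_scaleR_obs_a[OF C_abelian refl, of v x] arv_weight_scaleR_obs_a[OF C_abelian refl, of v x']
    by (simp add: obs_eq)
  then show "x - x' \<in> unobservable C A"
    by (simp add: unobservable_def linear_diff[OF linear_output])
next
  assume "x - x' \<in> unobservable C A"
  then have "C (wordop A v x) = C (wordop A v x')" for v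
    by (simp add: unobservable_def linear_diff[OF linear_output])
  then show "obs_a C A x = obs_a C A x'"
    by (simp add: obs_a_def)
qed

lemma Q_a_eq: "Q_a C A = orth_proj ((unobservable C A)\<^sup>\<bottom>)"
  by (simp add: Q_a_def gram_a_eq_gram gram_eq_0_iff)

lemma Q_a_mem: "Q_a C A x \<in> (unobservable C A)\<^sup>\<bottom>"
  unfolding Q_a_eq by (rule orth_proj_orthogonal_comp(1)[OF subspace_unobservable closed_unobservable])

lemma diff_Q_a_mem: "x - Q_a C A x \<in> unobservable C A"
  unfolding Q_a_eq by (rule orth_proj_orthogonal_comp(2)[OF subspace_unobservable closed_unobservable])

lemma Q_a_cong: "x - x' \<in> unobservable C A \<Longrightarrow> Q_a C A x = Q_a C A x'"
  unfolding Q_a_eq by (rule orth_proj_orthogonal_comp_cong[OF subspace_unobservable closed_unobservable])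

lemma lifted_norm_obs_a: "lifted_norm C A (obs_a C A x) = norm (Q_a C A x)"
proof -
  have "obs_a C A (SOME x'. obs_a C A x' = obs_a C A x) = obs_a C A x"
    by (rule someI) (rule refl)
  then show ?thesis
    by (simp add: lifted_norm_def obs_a_eq_iff Q_a_cong)
qed

lemma lifted_norm_mult_lambda_adj_obs_a:
  "lifted_norm C A (mult_lambda_adj j (obs_a C A x)) = norm (Q_a C A (A j (Q_a C A x)))"
proof -
  have "A j x - A j (Q_a C A x) = A j (x - Q_a C A x)"
    by (simp add: linear_diff[OF bounded_linear.linear[OF bounded_linear_A]])
  then have "A j x - A j (Q_a C A x) \<in> unobservable C A"
    using unobservable_invariant[OF diff_Q_a_mem] by simp
  then show ?thesis
    by (simp add: mult_lambda_adj_obs_a lifted_norm_obs_a Q_a_cong)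
qed

lemma C_Q_a: "C (Q_a C A x) = C x"
proof -
  have "C (x - Q_a C A x) = 0"
    using diff_Q_a_mem[of x] unfolding unobservable_def mem_Collect_eq by (metis wordop_Nil)
  then show ?thesis
    by (simp add: linear_diff[OF bounded_linear.linear[OF bounded_linear_C]])
qed

lemma lifted_norm_obs_a_minus_eval0:
  "(lifted_norm C A (obs_a C A x))\<^sup>2 - (norm (arv_eval0 (obs_a C A x)))\<^sup>2
     = (norm (Q_a C A x))\<^sup>2 - (norm (C (Q_a C A x)))\<^sup>2"
  by (simp add: lifted_norm_obs_a arv_eval0_obs_a C_Q_a)

lemma lifted_backward_shift_le:
  assumes "f \<in> range (obs_a C A)"
  shows "(\<Sum>j\<in>UNIV. (lifted_norm C A (mult_lambda_adj j f))\<^sup>2)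
    \<le> (lifted_norm C A f)\<^sup>2 - (norm (arv_eval0 f))\<^sup>2"
proof -
  obtain x where f: "f = obs_a C A x"
    using assms by blast
  define y where "y = Q_a C A x"
  have "(\<Sum>j\<in>UNIV. (norm (Q_a C A (A j y)))\<^sup>2) \<le> (\<Sum>j\<in>UNIV. (norm (A j y))\<^sup>2)"
    unfolding Q_a_eq
    by (intro sum_mono power_mono norm_orth_proj_orthogonal_comp_le subspace_unobservable
        closed_unobservable norm_ge_zero)
  also have "\<dots> \<le> (norm y)\<^sup>2 - (norm (C y))\<^sup>2"
    using contractive by (simp add: contractive_pair_def algebra_simps)
  finally show ?thesis
    by (simp add: f y_def lifted_norm_mult_lambda_adj_obs_a lifted_norm_obs_a_minus_eval0)
qed

lemma lifted_backward_shift_eq_iff: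
  "(\<forall>f\<in>range (obs_a C A). (\<Sum>j\<in>UNIV. (lifted_norm C A (mult_lambda_adj j f))\<^sup>2)
        = (lifted_norm C A f)\<^sup>2 - (norm (arv_eval0 f))\<^sup>2)
    \<longleftrightarrow> isometric_pair_on ((unobservable C A)\<^sup>\<bottom>) C A"
proof -
  have Q_a_id: "Q_a C A y = y" if "y \<in> (unobservable C A)\<^sup>\<bottom>" for y
    unfolding Q_a_eq using that by (rule orth_proj_id[OF subspace_orthogonal_comp])
  have "(\<forall>f\<in>range (obs_a C A). (\<Sum>j\<in>UNIV. (lifted_norm C A (mult_lambda_adj j f))\<^sup>2)
        = (lifted_norm C A f)\<^sup>2 - (norm (arv_eval0 f))\<^sup>2)
      \<longleftrightarrow> (\<forall>x. (\<Sum>j\<in>UNIV. (norm (Q_a C A (A j (Q_a C A x))))\<^sup>2)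
              = (norm (Q_a C A x))\<^sup>2 - (norm (C (Q_a C A x)))\<^sup>2)"
    by (simp add: lifted_norm_mult_lambda_adj_obs_a lifted_norm_obs_a_minus_eval0)
  also have "\<dots> \<longleftrightarrow> (\<forall>y\<in>(unobservable C A)\<^sup>\<bottom>. (\<Sum>j\<in>UNIV. (norm (Q_a C A (A j y)))\<^sup>2)
              = (norm y)\<^sup>2 - (norm (C y))\<^sup>2)"
    using Q_a_mem Q_a_id by metis
  also have "\<dots> \<longleftrightarrow> isometric_pair_on ((unobservable C A)\<^sup>\<bottom>) C A"
    unfolding isometric_pair_on_def Q_a_eq by (intro ball_cong) auto
  finally show ?thesis .
qed

end

theorem theorem3p15:
  fixes C :: "'x::{real_inner,complete_space} \<Rightarrow> 'y::{real_inner,complete_space}"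
    and A :: "'d::finite \<Rightarrow> 'x \<Rightarrow> 'x"
  assumes "bounded_linear C"
    and "\<And>j. bounded_linear (A j)"
    and "contractive_pair C A"
    and "a_output_stable C A"
    and "C_abelian C A"
  shows "((\<forall>j x. mult_lambda_adj j (obs_a C A x) = obs_a C A (A j x))
       \<and> (\<forall>j. mult_lambda_adj j ` range (obs_a C A) \<subseteq> range (obs_a C A)))
     \<and> (\<forall>x. arv_norm (obs_a C A x) \<le> norm x)
     \<and> ((\<forall>x. arv_norm (obs_a C A x) = norm x) \<longleftrightarrow> isometric_pair C A \<and> strongly_stable A)
     \<and> (\<forall>f\<in>range (obs_a C A).
           (\<Sum>j\<in>UNIV. (lifted_norm C A (mult_lambda_adj j f))\<^sup>2)
             \<le> (lifted_norm C A f)\<^sup>2 - (norm (arv_eval0 f))\<^sup>2)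
     \<and> ((\<forall>f\<in>range (obs_a C A).
           (\<Sum>j\<in>UNIV. (lifted_norm C A (mult_lambda_adj j f))\<^sup>2)
             = (lifted_norm C A f)\<^sup>2 - (norm (arv_eval0 f))\<^sup>2)
       \<longleftrightarrow> ((\<forall>j. A j ` orthogonal_comp {x. gram C A x = 0} \<subseteq> orthogonal_comp {x. gram C A x = 0})
            \<and> isometric_pair_on (orthogonal_comp {x. gram C A x = 0}) C A))"
proof -
  interpret abelian_system C A
    using assms(1-3,5)
    by (simp add: abelian_system_def abelian_system_axioms_def linear_contractive_system_def
        linear_contractive_system_axioms_def contractive_system_def)
  have kernel: "{x. gram C A x = 0} = unobservable C A"
    using gram_eq_0_iff by blast
  have invariant: "A j ` ((unobservable C A)\<^sup>\<bottom>) \<subseteq> (unobservable C A)\<^sup>\<bottom>"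
    if "isometric_pair_on ((unobservable C A)\<^sup>\<bottom>) C A" for j
    using isometric_pair_on_orthogonal_comp_invariant[OF contractive subspace_unobservable
        closed_unobservable that] by (simp add: image_subset_iff)
  have "(\<forall>x. arv_norm (obs_a C A x) = norm x) \<longleftrightarrow> isometric_pair C A \<and> strongly_stable A"
    by (simp add: arv_norm_obs_a_eq_iff output_energy_eq_norm_iff)
  moreover have "(\<forall>f\<in>range (obs_a C A). (\<Sum>j\<in>UNIV. (lifted_norm C A (mult_lambda_adj j f))\<^sup>2)
        = (lifted_norm C A f)\<^sup>2 - (norm (arv_eval0 f))\<^sup>2)
      \<longleftrightarrow> (\<forall>j. A j ` ((unobservable C A)\<^sup>\<bottom>) \<subseteq> (unobservable C A)\<^sup>\<bottom>)
        \<and> isometric_pair_on ((unobservable C A)\<^sup>\<bottom>) C A"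
    using lifted_backward_shift_eq_iff invariant by blast
  ultimately show ?thesis
    unfolding kernel using mult_lambda_adj_obs_a arv_norm_obs_a_le lifted_backward_shift_le
    by (auto simp: mult_lambda_adj_obs_a)
qed

end
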